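(* Consider the Gaussian broadcast model on $P=\mathcal{HS}_2$ with $\alpha_2=1/2$. For every positive integer $t$, every positive integer $N$, and all reals $a_1,\dots,a_N$ not all zero, the random variable $\zeta:=a_1X_{(1,t-1)}+\cdots+a_NX_{(N,t-N)}$ satisfies $$\frac{\operatorname{Cov}(\zeta,X_0)}{\sqrt{\operatorname{Var}(\zeta)}}\le\frac{2^{14}N^{3/2}}{t^{1/4}}.$$
   Context: Infinite model: $\mathcal{HS}_{d+1}=\{(x_1,\dots,x_{d+1})\in\mathbb Z^{d+1}:x_1+\dots+x_{d+1}\ge0\}$ with $u\le v$ iff $v-u\in\mathbb Z_{\ge0}^{d+1}$; layer $L_t$ = points with coordinate sum $t$; each point $v$ of rank $\ge1$ covers exactly the $d+1$ points $v-e_i$ (the set $\mathfrak p(v)$). Gaussian broadcast model: $X_0\sim\mathcal N(0,1)$; independently, i.i.d. $W_{u\to v}\sim\mathcal N(0,1)$ for covering pairs $u\lessdot v$; $X_v=X_0$ for every $v\in L_0$; and $X_v=\alpha_{d+1}\sum_{u\in\mathfrak p(v)}(X_u+W_{u\to v})$ for $v$ of rank $\ge1$. Here $d=1$. *)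

theory Defs
  imports "HOL-Probability.Probability"
begin

definition rank2 :: "int \<times> int \<Rightarrow> int" where
  "rank2 v = fst v + snd v"

definition HS2 :: "(int \<times> int) set" where
  "HS2 = {v. rank2 v \<ge> 0}"

definition parent2 :: "int \<times> int \<Rightarrow> nat \<Rightarrow> int \<times> int" where
  "parent2 v i = (if i = 0 then (fst v - 1, snd v) else (fst v, snd v - 1))"

text \<open>Covering pairs u \<lessdot> v in HS_2 are indexed by (v,i) with rank v \<ge> 1 and i \<in> {0,1},
  where u = parent2 v i.\<close>
definition edges2 :: "((int \<times> int) \<times> nat) set" where
  "edges2 = {(v, i). rank2 v \<ge> 1 \<and> i \<in> {0, 1}}"

definition gaussian_broadcast_HS2 ::
  "'a measure \<Rightarrow> ('a \<Rightarrow> real) \<Rightarrow> ((int \<times> int) \<times> nat \<Rightarrow> 'a \<Rightarrow> real)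
     \<Rightarrow> (int \<times> int \<Rightarrow> 'a \<Rightarrow> real) \<Rightarrow> bool" where
  "gaussian_broadcast_HS2 M X0 W X \<longleftrightarrow>
     prob_space M \<and>
     prob_space.indep_vars M (\<lambda>_. borel)
        (\<lambda>j. case j of None \<Rightarrow> X0 | Some e \<Rightarrow> W e) ({None} \<union> Some ` edges2) \<and>
     distributed M lborel X0 std_normal_density \<and>
     (\<forall>e\<in>edges2. distributed M lborel (W e) std_normal_density) \<and>
     (\<forall>v. rank2 v = 0 \<longrightarrow> (\<forall>\<omega>\<in>space M. X v \<omega> = X0 \<omega>)) \<and>
     (\<forall>v. rank2 v \<ge> 1 \<longrightarrow> (\<forall>\<omega>\<in>space M.
        X v \<omega> = (1/2) * (\<Sum>i\<in>{0,1::nat}. X (parent2 v i) \<omega> + W (v, i) \<omega>)))"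

end

theory Submission
  imports Defs
begin

text \<open>Unfolding the recursion writes \<open>X\<^sub>v = X\<^sub>0 + \<Sum>\<^sub>e c\<^sub>v(e) W\<^sub>e\<close> over the edges below \<open>v\<close>, so for
  \<open>\<zeta> = \<Sum> a\<^sub>k X\<^sub>v\<^sub>k\<close> one gets \<open>Cov(\<zeta>, X\<^sub>0) = A := \<Sum> a\<^sub>k\<close> and \<open>Var \<zeta> = A\<^sup>2 + \<Sum>\<^sub>e b\<^sub>e\<^sup>2\<close> with
  \<open>b\<^sub>e = \<Sum> a\<^sub>k c\<^sub>v\<^sub>k(e)\<close>. Dually, every \<open>\<Psi>\<close> vanishing on the layer \<open>L\<^sub>0\<close> satisfies
  \<open>\<Psi>(v) = \<Sum>\<^sub>e c\<^sub>v(e) \<Delta>\<Psi>(e)\<close>, where \<open>\<Delta>\<Psi>(w) = \<Psi>(w) - (\<Psi>(w - e\<^sub>1) + \<Psi>(w - e\<^sub>2))/2\<close>.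
  Taking \<open>\<Psi>(w) = rank(w)/t \<cdot> u(w\<^sub>1 - w\<^sub>2)\<close>, with \<open>u\<close> a quartic bump of width \<open>\<surd>t\<close> equal to 1
  on the targets \<open>v\<^sub>k = (k, t - k)\<close>, gives \<open>A = \<Sum>\<^sub>e \<Delta>\<Psi>(e) b\<^sub>e\<close>; by Cauchy-Schwarz
  \<open>Cov\<^sup>2/Var \<le> \<Sum>\<^sub>e \<Delta>\<Psi>(e)\<^sup>2\<close>. As \<open>\<Delta>\<Psi> = O(1/t)\<close> (the second differences of \<open>u\<close> are \<open>O(1/t)\<close>)
  and \<open>\<Delta>\<Psi>\<close> is supported on \<open>O(t (N + \<surd>t))\<close> edges, this sum is \<open>O(N/\<surd>t)\<close>.\<close>

lemma (in prob_space) std_normal_moments: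
  assumes D: "distributed M lborel Y std_normal_density"
  shows "integrable M Y" "expectation Y = 0"
    "integrable M (\<lambda>\<omega>. Y \<omega> * Y \<omega>)" "expectation (\<lambda>\<omega>. Y \<omega> * Y \<omega>) = 1"
proof -
  show "integrable M Y"
    using distributed_integrable[OF D, of "\<lambda>x. x"] integrable_std_normal_moment[of 1] by simp
  show "expectation Y = 0"
    using standard_normal_distributed_expectation[OF D] by simp
  show "integrable M (\<lambda>\<omega>. Y \<omega> * Y \<omega>)"
    using distributed_integrable[OF D, of "\<lambda>x. x * x"] integrable_std_normal_moment[of 2]
    by (simp add: power2_eq_square)
  have "expectation (\<lambda>\<omega>. Y \<omega> * Y \<omega>) = (\<integral>x. std_normal_density x * (x * x) \<partial>lborel)"
    by (rule distributed_integral[OF D, symmetric]) auto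
  also have "\<dots> = 1"
    using integral_std_normal_moment_even[of 1] by (simp add: power2_eq_square)
  finally show "expectation (\<lambda>\<omega>. Y \<omega> * Y \<omega>) = 1" .
qed

lemma (in prob_space) indep_std_normal_orthonormal:
  assumes indep: "indep_vars (\<lambda>_. borel) Y I"
    and normal: "\<And>i. i \<in> I \<Longrightarrow> distributed M lborel (Y i) std_normal_density"
    and i: "i \<in> I" and j: "j \<in> I"
  shows "integrable M (\<lambda>\<omega>. Y i \<omega> * Y j \<omega>)"
    and "expectation (\<lambda>\<omega>. Y i \<omega> * Y j \<omega>) = (if i = j then 1 else 0)"
proof -
  note moments = std_normal_moments[OF normal]
  have "integrable M (\<lambda>\<omega>. Y i \<omega> * Y j \<omega>) \<and>
    expectation (\<lambda>\<omega>. Y i \<omega> * Y j \<omega>) = (if i = j then 1 else 0)"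
  proof (cases "i = j")
    case True
    then show ?thesis using moments i by simp
  next
    case False
    have indep2: "indep_vars (\<lambda>_. borel) Y {i, j}"
      by (rule indep_vars_subset[OF indep]) (use i j in auto)
    have int: "\<And>k. k \<in> {i, j} \<Longrightarrow> integrable M (Y k)" using moments i j by auto
    have prod: "(\<lambda>\<omega>. \<Prod>k\<in>{i, j}. Y k \<omega>) = (\<lambda>\<omega>. Y i \<omega> * Y j \<omega>)" using False by simp
    have "integrable M (\<lambda>\<omega>. \<Prod>k\<in>{i, j}. Y k \<omega>)"
      by (rule indep_vars_integrable[OF _ indep2 int]) auto
    moreover have "expectation (\<lambda>\<omega>. \<Prod>k\<in>{i, j}. Y k \<omega>) = (\<Prod>k\<in>{i, j}. expectation (Y k))"
      by (rule indep_vars_lebesgue_integral[OF _ indep2 int]) auto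
    ultimately show ?thesis using False moments i j by (simp add: prod)
  qed
  then show "integrable M (\<lambda>\<omega>. Y i \<omega> * Y j \<omega>)"
    and "expectation (\<lambda>\<omega>. Y i \<omega> * Y j \<omega>) = (if i = j then 1 else 0)" by auto
qed

lemma (in prob_space) indep_std_normal_sum_moments:
  assumes indep: "indep_vars (\<lambda>_. borel) Y I"
    and normal: "\<And>i. i \<in> I \<Longrightarrow> distributed M lborel (Y i) std_normal_density"
    and J: "finite J" "J \<subseteq> I" and j0: "j0 \<in> J"
  shows "expectation (\<lambda>\<omega>. \<Sum>j\<in>J. c j * Y j \<omega>) = 0"
    and "expectation (\<lambda>\<omega>. (\<Sum>j\<in>J. c j * Y j \<omega>) * Y j0 \<omega>) = c j0"
    and "expectation (\<lambda>\<omega>. (\<Sum>j\<in>J. c j * Y j \<omega>)\<^sup>2) = (\<Sum>j\<in>J. (c j)\<^sup>2)"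
proof -
  have mean: "integrable M (Y j)" "expectation (Y j) = 0" if "j \<in> J" for j
    using std_normal_moments[OF normal] J(2) that by auto
  note orth = indep_std_normal_orthonormal[OF indep normal subsetD[OF J(2)] subsetD[OF J(2)]]
  show "expectation (\<lambda>\<omega>. \<Sum>j\<in>J. c j * Y j \<omega>) = 0"
    using mean by simp
  have "expectation (\<lambda>\<omega>. (\<Sum>j\<in>J. c j * Y j \<omega>) * Y j0 \<omega>)
      = expectation (\<lambda>\<omega>. \<Sum>j\<in>J. c j * (Y j \<omega> * Y j0 \<omega>))"
    by (simp add: sum_distrib_right mult.assoc)
  also have "\<dots> = (\<Sum>j\<in>J. c j * (if j = j0 then 1 else 0))"
    using orth j0 by simp
  also have "\<dots> = c j0" using J(1) j0 by (simp add: if_distrib sum.delta cong: if_cong)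
  finally show "expectation (\<lambda>\<omega>. (\<Sum>j\<in>J. c j * Y j \<omega>) * Y j0 \<omega>) = c j0" .
  have "expectation (\<lambda>\<omega>. (\<Sum>j\<in>J. c j * Y j \<omega>)\<^sup>2)
      = expectation (\<lambda>\<omega>. \<Sum>j\<in>J. \<Sum>j'\<in>J. c j * c j' * (Y j \<omega> * Y j' \<omega>))"
    by (simp add: power2_eq_square sum_product algebra_simps)
  also have "\<dots> = (\<Sum>j\<in>J. \<Sum>j'\<in>J. c j * c j' * (if j = j' then 1 else 0))"
    using orth by (simp add: integrable_sum)
  also have "\<dots> = (\<Sum>j\<in>J. (c j)\<^sup>2)"
    using J(1) by (simp add: if_distrib sum.delta power2_eq_square cong: if_cong)
  finally show "expectation (\<lambda>\<omega>. (\<Sum>j\<in>J. c j * Y j \<omega>)\<^sup>2) = (\<Sum>j\<in>J. (c j)\<^sup>2)" .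
qed

lemma broadcast_noise_moments:
  assumes model: "gaussian_broadcast_HS2 M X0 W X"
    and F: "finite F" "F \<subseteq> edges2"
    and \<zeta>: "\<And>\<omega>. \<omega> \<in> space M \<Longrightarrow> \<zeta> \<omega> = A * X0 \<omega> + (\<Sum>e\<in>F. b e * W e \<omega>)"
  shows "(\<integral>\<omega>. X0 \<omega> \<partial>M) = 0" and "(\<integral>\<omega>. \<zeta> \<omega> \<partial>M) = 0"
    and "(\<integral>\<omega>. \<zeta> \<omega> * X0 \<omega> \<partial>M) = A"
    and "(\<integral>\<omega>. (\<zeta> \<omega>)\<^sup>2 \<partial>M) = A\<^sup>2 + (\<Sum>e\<in>F. (b e)\<^sup>2)"
proof -
  interpret prob_space M using model by (simp add: gaussian_broadcast_HS2_def)
  define I where "I = {None} \<union> Some ` edges2"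
  define J where "J = insert None (Some ` F)"
  have indep: "indep_vars (\<lambda>_. borel) (case_option X0 W) I"
    using model unfolding gaussian_broadcast_HS2_def I_def by simp
  have normal: "\<And>i. i \<in> I \<Longrightarrow> distributed M lborel (case_option X0 W i) std_normal_density"
    using model unfolding gaussian_broadcast_HS2_def I_def by auto
  have J: "finite J" "J \<subseteq> I" "None \<in> J" using F by (auto simp: I_def J_def)
  note sums = indep_std_normal_sum_moments[OF indep normal J, of "case_option A b"]
  have \<zeta>J: "\<zeta> \<omega> = (\<Sum>j\<in>J. case_option A b j * case_option X0 W j \<omega>)" if "\<omega> \<in> space M" for \<omega>
    using \<zeta>[OF that] F(1) by (simp add: J_def sum.reindex)
  show "expectation X0 = 0"
    using std_normal_moments(2)[OF normal[of None]] by (simp add: I_def)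
  show "expectation \<zeta> = 0"
    using sums(1) by (simp add: \<zeta>J cong: Bochner_Integration.integral_cong)
  show "expectation (\<lambda>\<omega>. \<zeta> \<omega> * X0 \<omega>) = A"
    using sums(2) by (simp add: \<zeta>J cong: Bochner_Integration.integral_cong)
  show "expectation (\<lambda>\<omega>. (\<zeta> \<omega>)\<^sup>2) = A\<^sup>2 + (\<Sum>e\<in>F. (b e)\<^sup>2)"
    using sums(3) F(1) by (simp add: \<zeta>J J_def sum.reindex cong: Bochner_Integration.integral_cong)
qed

lemma rank2_parent2 [simp]: "rank2 (parent2 w i) = rank2 w - 1"
  by (simp add: parent2_def rank2_def)

definition parent_closed :: "(int \<times> int) set \<Rightarrow> bool" where
  "parent_closed C \<longleftrightarrow> (\<forall>w\<in>C. 1 \<le> rank2 w \<longrightarrow> (\<forall>i\<in>{0,1}. parent2 w i \<in> C))"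

definition edges_in :: "(int \<times> int) set \<Rightarrow> ((int \<times> int) \<times> nat) set" where
  "edges_in C = {e \<in> edges2. fst e \<in> C}"

text \<open>For \<open>v\<close> of rank \<open>n\<close>, \<open>noise_coeff n v e\<close> is the coefficient of \<open>W e\<close> in \<open>X v\<close>.\<close>

fun noise_coeff :: "nat \<Rightarrow> int \<times> int \<Rightarrow> (int \<times> int) \<times> nat \<Rightarrow> real" where
  "noise_coeff 0 v e = 0"
| "noise_coeff (Suc n) v e =
     (1/2) * (\<Sum>i\<in>{0,1::nat}. noise_coeff n (parent2 v i) e + (if e = (v, i) then 1 else 0))"

definition parent_defect :: "(int \<times> int \<Rightarrow> real) \<Rightarrow> int \<times> int \<Rightarrow> real" where
  "parent_defect \<Psi> w = \<Psi> w - (\<Psi> (parent2 w 0) + \<Psi> (parent2 w 1)) / 2"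

lemma sum_noise_coeff_Suc:
  assumes fin: "finite (edges_in C)" and v: "v \<in> C" "1 \<le> rank2 v"
  shows "(\<Sum>e\<in>edges_in C. H e * noise_coeff (Suc n) v e)
    = (1/2) * (\<Sum>i\<in>{0,1::nat}. (\<Sum>e\<in>edges_in C. H e * noise_coeff n (parent2 v i) e) + H (v, i))"
proof -
  have delta: "(\<Sum>e\<in>edges_in C. H e * (if e = (v, i) then 1 else 0)) = H (v, i)"
    if "i \<in> {0,1::nat}" for i
  proof -
    have "(v, i) \<in> edges_in C" using v that by (auto simp: edges_in_def edges2_def)
    then show ?thesis using fin by (simp add: if_distrib sum.delta' cong: if_cong)
  qed
  have "(\<Sum>e\<in>edges_in C. H e * noise_coeff (Suc n) v e)
     = (1/2) * (\<Sum>i\<in>{0,1::nat}. (\<Sum>e\<in>edges_in C. H e * noise_coeff n (parent2 v i) e)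
         + (\<Sum>e\<in>edges_in C. H e * (if e = (v, i) then 1 else 0)))"
    by (simp add: sum_distrib_left sum.distrib algebra_simps)
  then show ?thesis using delta by simp
qed

lemma broadcast_noise_expansion:
  assumes model: "gaussian_broadcast_HS2 M X0 W X"
    and C: "parent_closed C" "finite (edges_in C)"
  shows "v \<in> C \<Longrightarrow> rank2 v = int n \<Longrightarrow> \<omega> \<in> space M \<Longrightarrow>
    X v \<omega> = X0 \<omega> + (\<Sum>e\<in>edges_in C. W e \<omega> * noise_coeff n v e)"
proof (induction n arbitrary: v)
  case 0
  then have "rank2 v = 0" by simp
  then have "X v \<omega> = X0 \<omega>" using model 0(3) unfolding gaussian_broadcast_HS2_def by blast
  then show ?case by simp
next
  case (Suc n)
  have r: "1 \<le> rank2 v" using Suc.prems(2) by simp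
  have step: "X v \<omega> = (1/2) * (\<Sum>i\<in>{0,1::nat}. X (parent2 v i) \<omega> + W (v, i) \<omega>)"
    using model r Suc.prems(3) unfolding gaussian_broadcast_HS2_def by blast
  have "X (parent2 v i) \<omega> = X0 \<omega> + (\<Sum>e\<in>edges_in C. W e \<omega> * noise_coeff n (parent2 v i) e)"
    if "i \<in> {0,1}" for i
    using Suc that C(1) r by (intro Suc.IH) (auto simp: parent_closed_def)
  then show ?case
    unfolding step sum_noise_coeff_Suc[OF C(2) Suc.prems(1) r, of "\<lambda>e. W e \<omega>"] by simp
qed

lemma sum_parent_defect_noise_coeff:
  assumes C: "parent_closed C" "finite (edges_in C)"
    and base: "\<And>w. rank2 w = 0 \<Longrightarrow> \<Psi> w = 0"
  shows "v \<in> C \<Longrightarrow> rank2 v = int n \<Longrightarrow>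
    (\<Sum>e\<in>edges_in C. parent_defect \<Psi> (fst e) * noise_coeff n v e) = \<Psi> v"
proof (induction n arbitrary: v)
  case 0
  then show ?case using base by simp
next
  case (Suc n)
  have r: "1 \<le> rank2 v" using Suc.prems(2) by simp
  have "(\<Sum>e\<in>edges_in C. parent_defect \<Psi> (fst e) * noise_coeff n (parent2 v i) e) = \<Psi> (parent2 v i)"
    if "i \<in> {0,1}" for i
    using Suc that C(1) r by (intro Suc.IH) (auto simp: parent_closed_def)
  then show ?case
    unfolding sum_noise_coeff_Suc[OF C(2) Suc.prems(1) r] by (simp add: parent_defect_def)
qed

definition target_cone :: "nat \<Rightarrow> nat \<Rightarrow> (int \<times> int) set" where
  "target_cone t N = {w. 0 \<le> rank2 w \<and> (\<exists>k\<in>{1..N}. fst w \<le> int k \<and> snd w \<le> int t - int k)}"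

lemma target_in_target_cone: "k \<in> {1..N} \<Longrightarrow> (int k, int t - int k) \<in> target_cone t N"
  by (auto simp: target_cone_def rank2_def)

lemma parent_closed_target_cone: "parent_closed (target_cone t N)"
  unfolding parent_closed_def target_cone_def
  by (auto simp: parent2_def rank2_def) force+

lemma edges_in_target_cone_subset:
  "edges_in (target_cone t N) \<subseteq> ({-int t..int N} \<times> {-int N..int t}) \<times> {0,1}"
  by (force simp: edges_in_def edges2_def target_cone_def rank2_def)

lemma finite_edges_in_target_cone: "finite (edges_in (target_cone t N))"
  by (rule finite_subset[OF edges_in_target_cone_subset]) auto

lemma rank2_edges_in_target_cone:
  "e \<in> edges_in (target_cone t N) \<Longrightarrow> 1 \<le> rank2 (fst e) \<and> rank2 (fst e) \<le> int t"
  by (auto simp: edges_in_def edges2_def target_cone_def rank2_def)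

definition target_coeff :: "nat \<Rightarrow> nat \<Rightarrow> (nat \<Rightarrow> real) \<Rightarrow> (int \<times> int) \<times> nat \<Rightarrow> real" where
  "target_coeff t N a e = (\<Sum>k=1..N. a k * noise_coeff t (int k, int t - int k) e)"

lemma target_lincomb_expansion:
  assumes model: "gaussian_broadcast_HS2 M X0 W X" and \<omega>: "\<omega> \<in> space M"
  shows "(\<Sum>k=1..N. a k * X (int k, int t - int k) \<omega>)
    = (\<Sum>k=1..N. a k) * X0 \<omega> + (\<Sum>e\<in>edges_in (target_cone t N). target_coeff t N a e * W e \<omega>)"
proof -
  let ?F = "edges_in (target_cone t N)"
  have "X (int k, int t - int k) \<omega> = X0 \<omega> + (\<Sum>e\<in>?F. W e \<omega> * noise_coeff t (int k, int t - int k) e)"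
    if "k \<in> {1..N}" for k
    by (rule broadcast_noise_expansion[OF model parent_closed_target_cone finite_edges_in_target_cone
          target_in_target_cone[OF that] _ \<omega>]) (simp add: rank2_def)
  then have "(\<Sum>k=1..N. a k * X (int k, int t - int k) \<omega>)
      = (\<Sum>k=1..N. a k * X0 \<omega> + (\<Sum>e\<in>?F. a k * noise_coeff t (int k, int t - int k) e * W e \<omega>))"
    by (intro sum.cong) (simp_all add: distrib_left sum_distrib_left mult_ac)
  then show ?thesis
    by (simp add: target_coeff_def sum.distrib sum_distrib_right sum.swap[of _ ?F])
qed

lemma sum_eq_sum_parent_defect_target_coeff:
  assumes base: "\<And>w. rank2 w = 0 \<Longrightarrow> \<Psi> w = 0"
    and targets: "\<And>k. k \<in> {1..N} \<Longrightarrow> \<Psi> (int k, int t - int k) = 1"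
  shows "(\<Sum>k=1..N. a k)
    = (\<Sum>e\<in>edges_in (target_cone t N). parent_defect \<Psi> (fst e) * target_coeff t N a e)"
proof -
  let ?F = "edges_in (target_cone t N)"
  have "(\<Sum>e\<in>?F. parent_defect \<Psi> (fst e) * noise_coeff t (int k, int t - int k) e) = 1"
    if "k \<in> {1..N}" for k
    using sum_parent_defect_noise_coeff[OF parent_closed_target_cone finite_edges_in_target_cone
        base target_in_target_cone[OF that]] targets[OF that]
    by (simp add: rank2_def)
  then have "(\<Sum>k=1..N. a k)
      = (\<Sum>k=1..N. \<Sum>e\<in>?F. a k * (parent_defect \<Psi> (fst e) * noise_coeff t (int k, int t - int k) e))"
    by (simp add: sum_distrib_left[symmetric])
  then show ?thesis
    by (simp add: target_coeff_def sum_distrib_left sum.swap[of _ ?F] mult_ac)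
qed

definition bump :: "nat \<Rightarrow> int \<Rightarrow> real" where
  "bump L d = (if d \<le> int L then ((real L)\<^sup>2 - (real_of_int d)\<^sup>2)\<^sup>2 / (real L)^4 else 0)"

lemma bump_nonneg: "0 \<le> bump L d"
  by (simp add: bump_def)

lemma bump_le_one:
  assumes "1 \<le> L" "0 \<le> d" shows "bump L d \<le> 1"
proof (cases "d \<le> int L")
  case True
  have "0 \<le> (real L)\<^sup>2 - (real_of_int d)\<^sup>2" using True assms
    by (simp add: abs_le_square_iff[symmetric])
  then have "((real L)\<^sup>2 - (real_of_int d)\<^sup>2)\<^sup>2 \<le> ((real L)\<^sup>2)\<^sup>2"
    by (intro power_mono) auto
  then show ?thesis using True assms
    by (simp add: bump_def divide_le_eq power2_eq_square power4_eq_xxxx mult.assoc)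
qed (simp add: bump_def)

lemma bump_0: "1 \<le> L \<Longrightarrow> bump L 0 = 1"
  by (simp add: bump_def power2_eq_square power4_eq_xxxx)

lemma bump_eq_0: "int L \<le> d \<Longrightarrow> bump L d = 0"
  by (simp add: bump_def)

lemma bump_1:
  assumes "1 \<le> L" shows "\<bar>bump L 1 - 1\<bar> \<le> 2 / (real L)\<^sup>2"
proof -
  define s where "s = real L"
  have s: "1 \<le> s" using assms s_def by simp
  have "bump L 1 = (s\<^sup>2 - 1)\<^sup>2 / s^4" using assms by (simp add: bump_def s_def)
  also have "\<dots> = 1 - 2 / s\<^sup>2 + 1 / s^4" using s
    by (simp add: field_simps power2_eq_square power4_eq_xxxx)
  finally have diff: "bump L 1 - 1 = - 2 / s\<^sup>2 + 1 / s^4" by simp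
  have "1 / s^4 \<le> 1 / s\<^sup>2" using s
    by (intro divide_left_mono) (auto simp: power_increasing)
  moreover have "0 \<le> 1 / s^4" using s by simp
  moreover have "1 / s\<^sup>2 \<le> 2 / s\<^sup>2" using s by (simp add: divide_right_mono)
  ultimately show ?thesis unfolding diff s_def[symmetric] abs_le_iff by linarith
qed

lemma bump_second_diff:
  assumes "1 \<le> L" "1 \<le> d"
  shows "\<bar>bump L (d - 1) + bump L (d + 1) - 2 * bump L d\<bar> \<le> 18 / (real L)\<^sup>2"
proof -
  define s where "s = real L"
  have s: "1 \<le> s" using assms s_def by simp
  consider "d + 1 \<le> int L" | "d = int L" | "int L < d" by linarith
  then show ?thesis
  proof cases
    case 1
    define x where "x = real_of_int d"
    have x: "1 \<le> x" "x + 1 \<le> s" using 1 assms by (simp_all add: x_def s_def)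
    have "bump L (d - 1) + bump L (d + 1) - 2 * bump L d
        = ((s\<^sup>2 - (x-1)\<^sup>2)\<^sup>2 + (s\<^sup>2 - (x+1)\<^sup>2)\<^sup>2 - 2 * (s\<^sup>2 - x\<^sup>2)\<^sup>2) / s^4"
      using 1 by (simp add: bump_def s_def x_def diff_divide_distrib add_divide_distrib)
    also have "\<dots> = (12 * x\<^sup>2 + 2 - 4 * s\<^sup>2) / s^4"
      by (simp add: power2_eq_square algebra_simps)
    finally have diff: "bump L (d - 1) + bump L (d + 1) - 2 * bump L d = (12 * x\<^sup>2 + 2 - 4 * s\<^sup>2) / s^4" .
    have "x\<^sup>2 \<le> s\<^sup>2" "1 \<le> s\<^sup>2" using x s by (auto intro: power_mono)
    then have "\<bar>12 * x\<^sup>2 + 2 - 4 * s\<^sup>2\<bar> \<le> 18 * s\<^sup>2"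
      using zero_le_power2[of x] unfolding abs_le_iff by linarith
    then have "\<bar>12 * x\<^sup>2 + 2 - 4 * s\<^sup>2\<bar> / s^4 \<le> 18 * s\<^sup>2 / s^4"
      by (intro divide_right_mono) auto
    also have "18 * s\<^sup>2 / s^4 = 18 / s\<^sup>2" using s by (simp add: power2_eq_square power4_eq_xxxx)
    finally show ?thesis by (simp add: diff s_def abs_divide)
  next
    case 2
    have "bump L (d - 1) = (2 * s - 1)\<^sup>2 / s^4"
      using 2 by (simp add: bump_def s_def power2_eq_square algebra_simps)
    also have "\<dots> \<le> (2 * s)\<^sup>2 / s^4" using s by (intro divide_right_mono power_mono) auto
    also have "\<dots> = 4 / s\<^sup>2" using s by (simp add: power2_eq_square power4_eq_xxxx)
    finally have "bump L (d - 1) \<le> 4 / s\<^sup>2" .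
    moreover have "bump L (d + 1) = 0" "bump L d = 0" using 2 by (simp_all add: bump_eq_0)
    ultimately show ?thesis using s bump_nonneg[of L "d - 1"] by (simp add: s_def)
  qed (simp add: bump_eq_0)
qed

definition interval_dist :: "int \<Rightarrow> int \<Rightarrow> int \<Rightarrow> int" where
  "interval_dist \<alpha> \<beta> y = max 0 (max (\<alpha> - y) (y - \<beta>))"

definition interval_bump :: "nat \<Rightarrow> int \<Rightarrow> int \<Rightarrow> int \<Rightarrow> real" where
  "interval_bump L \<alpha> \<beta> y = bump L (interval_dist \<alpha> \<beta> y)"

lemma interval_bump_bounds: "1 \<le> L \<Longrightarrow> 0 \<le> interval_bump L \<alpha> \<beta> y \<and> interval_bump L \<alpha> \<beta> y \<le> 1"
  by (simp add: interval_bump_def bump_nonneg bump_le_one interval_dist_def)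

lemma interval_bump_second_diff:
  assumes L: "1 \<le> L" and "\<alpha> \<le> \<beta>"
  shows "\<bar>interval_bump L \<alpha> \<beta> (y - 1) + interval_bump L \<alpha> \<beta> (y + 1) - 2 * interval_bump L \<alpha> \<beta> y\<bar>
    \<le> 18 / (real L)\<^sup>2"
proof -
  consider "\<beta> < y" | "y < \<alpha>" | "\<alpha> \<le> y" "y \<le> \<beta>" by linarith
  then show ?thesis
  proof cases
    case 1
    then have "interval_dist \<alpha> \<beta> (y - 1) = (y - \<beta>) - 1" "interval_dist \<alpha> \<beta> (y + 1) = (y - \<beta>) + 1"
      "interval_dist \<alpha> \<beta> y = y - \<beta>" using assms by (auto simp: interval_dist_def)
    then show ?thesis using bump_second_diff[OF L, of "y - \<beta>"] 1 by (simp add: interval_bump_def)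
  next
    case 2
    then have "interval_dist \<alpha> \<beta> (y - 1) = (\<alpha> - y) + 1" "interval_dist \<alpha> \<beta> (y + 1) = (\<alpha> - y) - 1"
      "interval_dist \<alpha> \<beta> y = \<alpha> - y" using assms by (auto simp: interval_dist_def)
    then show ?thesis using bump_second_diff[OF L, of "\<alpha> - y"] 2 by (simp add: interval_bump_def add.commute)
  next
    case 3
    have near: "\<bar>interval_bump L \<alpha> \<beta> y' - 1\<bar> \<le> 9 / (real L)\<^sup>2" if "y' \<in> {y - 1, y + 1}" for y'
    proof -
      have "interval_dist \<alpha> \<beta> y' \<in> {0, 1}" using 3 that by (auto simp: interval_dist_def)
      moreover have "2 / (real L)\<^sup>2 \<le> 9 / (real L)\<^sup>2" by (simp add: divide_right_mono)
      ultimately show ?thesis using bump_1[OF L] bump_0[OF L] by (auto simp: interval_bump_def)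
    qed
    have "\<bar>interval_bump L \<alpha> \<beta> (y - 1) - 1\<bar> \<le> 9 / (real L)\<^sup>2"
      and "\<bar>interval_bump L \<alpha> \<beta> (y + 1) - 1\<bar> \<le> 9 / (real L)\<^sup>2" by (rule near; simp)+
    moreover have "interval_bump L \<alpha> \<beta> y = 1"
      using 3 L by (simp add: interval_bump_def interval_dist_def bump_0)
    ultimately show ?thesis by (simp only: abs_le_iff) linarith
  qed
qed

text \<open>The targets \<open>(k, t - k)\<close>, \<open>1 \<le> k \<le> N\<close>, are the points of rank \<open>t\<close> whose coordinate
  difference lies in \<open>[2 - t, 2N - t]\<close>.\<close>

definition test_fn :: "nat \<Rightarrow> nat \<Rightarrow> nat \<Rightarrow> int \<times> int \<Rightarrow> real" where
  "test_fn t N L w =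
     real_of_int (rank2 w) / real t * interval_bump L (2 - int t) (2 * int N - int t) (fst w - snd w)"

lemma test_fn_rank0: "rank2 w = 0 \<Longrightarrow> test_fn t N L w = 0"
  by (simp add: test_fn_def)

lemma test_fn_target:
  assumes "1 \<le> t" "1 \<le> L" "k \<in> {1..N}"
  shows "test_fn t N L (int k, int t - int k) = 1"
proof -
  have "interval_dist (2 - int t) (2 * int N - int t) (int k - (int t - int k)) = 0"
    using assms(3) by (auto simp: interval_dist_def)
  then show ?thesis using assms by (simp add: test_fn_def rank2_def interval_bump_def bump_0)
qed

lemma parent_defect_test_fn:
  fixes t N L :: nat and w :: "int \<times> int"
  defines "u \<equiv> interval_bump L (2 - int t) (2 * int N - int t)" and "y \<equiv> fst w - snd w"
  shows "parent_defect (test_fn t N L) w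
    = u y / real t - (real_of_int (rank2 w) - 1) / real t * (u (y - 1) + u (y + 1) - 2 * u y) / 2"
proof -
  define r where "r = real_of_int (rank2 w)"
  have "test_fn t N L w = r / real t * u y"
    and "test_fn t N L (parent2 w 0) = (r - 1) / real t * u (y - 1)"
    and "test_fn t N L (parent2 w 1) = (r - 1) / real t * u (y + 1)"
    by (simp_all add: test_fn_def u_def y_def r_def parent2_def rank2_def algebra_simps)
  then show ?thesis unfolding parent_defect_def r_def[symmetric]
    by (cases "t = 0") (simp_all add: field_simps)
qed

lemma parent_defect_test_fn_bound:
  assumes t: "1 \<le> t" and N: "1 \<le> N" and L: "1 \<le> L" and r: "1 \<le> rank2 w" "rank2 w \<le> int t"
  shows "\<bar>parent_defect (test_fn t N L) w\<bar> \<le> 1 / real t + 9 / (real L)\<^sup>2"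
proof -
  define u where "u = interval_bump L (2 - int t) (2 * int N - int t)"
  define y where "y = fst w - snd w"
  define q where "q = (real_of_int (rank2 w) - 1) / real t"
  have "\<bar>u (y - 1) + u (y + 1) - 2 * u y\<bar> \<le> 18 / (real L)\<^sup>2"
    unfolding u_def using N by (intro interval_bump_second_diff[OF L]) simp
  moreover have "0 \<le> q" "q \<le> 1" using r t by (auto simp: q_def)
  ultimately have "\<bar>q * (u (y - 1) + u (y + 1) - 2 * u y)\<bar> \<le> 2 * (9 / (real L)\<^sup>2)"
    unfolding abs_mult using mult_mono[of q 1 "\<bar>u (y - 1) + u (y + 1) - 2 * u y\<bar>"] by fastforce
  moreover have "\<bar>u y / real t\<bar> \<le> 1 / real t"
    using interval_bump_bounds[OF L] by (simp add: u_def divide_right_mono)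
  ultimately show ?thesis
    unfolding parent_defect_test_fn u_def[symmetric] y_def[symmetric] q_def[symmetric]
    by (simp only: abs_le_iff) linarith
qed

lemma parent_defect_test_fn_far:
  assumes "int L < interval_dist (2 - int t) (2 * int N - int t) (fst w - snd w)"
  shows "parent_defect (test_fn t N L) w = 0"
proof -
  have "int L \<le> interval_dist \<alpha> \<beta> (y - 1)" "int L \<le> interval_dist \<alpha> \<beta> (y + 1)"
    "int L \<le> interval_dist \<alpha> \<beta> y" if "int L < interval_dist \<alpha> \<beta> y" for \<alpha> \<beta> y
    using that by (auto simp: interval_dist_def)
  then show ?thesis using assms
    by (simp add: parent_defect_test_fn interval_bump_def bump_eq_0)
qed

lemma sum_squares_le_card_support:
  fixes f :: "'b \<Rightarrow> real"
  assumes "finite E" and "\<And>e. e \<in> E \<Longrightarrow> P e \<Longrightarrow> \<bar>f e\<bar> \<le> c"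
    and "\<And>e. e \<in> E \<Longrightarrow> \<not> P e \<Longrightarrow> f e = 0"
  shows "(\<Sum>e\<in>E. (f e)\<^sup>2) \<le> real (card {e\<in>E. P e}) * c\<^sup>2"
proof -
  have "(\<Sum>e\<in>E. (f e)\<^sup>2) = (\<Sum>e\<in>{e\<in>E. P e}. (f e)\<^sup>2)"
    using assms by (intro sum.mono_neutral_right) auto
  also have "\<dots> \<le> (\<Sum>e\<in>{e\<in>E. P e}. c\<^sup>2)"
    using assms by (intro sum_mono) (auto simp: abs_le_square_iff[symmetric] intro: order_trans[OF _ abs_ge_self])
  finally show ?thesis by simp
qed

lemma card_edges_near_targets:
  assumes "1 \<le> N"
  shows "card {e \<in> edges_in (target_cone t N).
      interval_dist (2 - int t) (2 * int N - int t) (fst (fst e) - snd (fst e)) \<le> int L}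
    \<le> 4 * t * (N + L)"
proof -
  define S where "S = {e \<in> edges_in (target_cone t N).
      interval_dist (2 - int t) (2 * int N - int t) (fst (fst e) - snd (fst e)) \<le> int L}"
  define g where "g e = (rank2 (fst e), fst (fst e) - snd (fst e), snd e)" for e :: "(int \<times> int) \<times> nat"
  define T where "T = {1..int t} \<times> {2 - int t - int L .. 2 * int N - int t + int L} \<times> {0,1::nat}"
  have "inj_on g S"
  proof (rule inj_onI)
    fix x y assume "g x = g y"
    then have "fst (fst x) = fst (fst y)" "snd (fst x) = snd (fst y)" "snd x = snd y"
      by (auto simp: g_def rank2_def)
    then show "x = y" by (simp add: prod_eq_iff)
  qed
  moreover have "g ` S \<subseteq> T"
    using rank2_edges_in_target_cone
    by (fastforce simp: S_def T_def g_def interval_dist_def edges_in_def edges2_def)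
  ultimately have "card S \<le> card T" by (rule card_inj_on_le) (simp add: T_def)
  also have "card T = t * nat (2 * int N + 2 * int L - 1) * 2"
    unfolding T_def card_cartesian_product by simp
  also have "\<dots> \<le> t * (2 * N + 2 * L) * 2" by (intro mult_le_mono) auto
  also have "\<dots> = 4 * t * (N + L)" by simp
  finally show ?thesis unfolding S_def .
qed

lemma sum_squares_parent_defect_test_fn_le:
  assumes t: "1 \<le> t" and N: "1 \<le> N" and L: "1 \<le> L" and tL: "real t \<le> 4 * (real L)\<^sup>2"
  shows "(\<Sum>e\<in>edges_in (target_cone t N). (parent_defect (test_fn t N L) (fst e))\<^sup>2)
    \<le> 5476 * (real N + real L) / real t"
proof -
  let ?F = "edges_in (target_cone t N)"
  let ?near = "\<lambda>e. interval_dist (2 - int t) (2 * int N - int t) (fst (fst e) - snd (fst e)) \<le> int L"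
  have "9 / (real L)\<^sup>2 \<le> 36 / real t" using tL t L by (simp add: divide_simps)
  then have "1 / real t + 9 / (real L)\<^sup>2 \<le> 37 / real t" by (simp add: add_divide_distrib[symmetric])
  then have "\<bar>parent_defect (test_fn t N L) (fst e)\<bar> \<le> 37 / real t" if "e \<in> ?F" for e
    using parent_defect_test_fn_bound[OF t N L] rank2_edges_in_target_cone[OF that] by fastforce
  then have "(\<Sum>e\<in>?F. (parent_defect (test_fn t N L) (fst e))\<^sup>2)
      \<le> real (card {e\<in>?F. ?near e}) * (37 / real t)\<^sup>2"
    by (intro sum_squares_le_card_support finite_edges_in_target_cone)
      (auto intro: parent_defect_test_fn_far)
  also have "\<dots> \<le> real (4 * t * (N + L)) * (37 / real t)\<^sup>2"
    using card_edges_near_targets[OF N, of t L] by (intro mult_right_mono) (simp_all only: of_nat_le_iff zero_le_power2)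
  also have "\<dots> = 5476 * (real N + real L) / real t"
    using t by (simp add: power2_eq_square field_simps)
  finally show ?thesis .
qed

lemma floor_sqrt_bounds:
  assumes "1 \<le> t" and L: "L = nat \<lfloor>sqrt (real t)\<rfloor>"
  shows "1 \<le> L" "real L \<le> sqrt (real t)" "real t \<le> 4 * (real L)\<^sup>2"
proof -
  have "1 \<le> sqrt (real t)" using assms by simp
  then have L_eq: "real L = real_of_int \<lfloor>sqrt (real t)\<rfloor>" and "1 \<le> L" using L by linarith+
  then show "1 \<le> L" "real L \<le> sqrt (real t)" by linarith+
  have "sqrt (real t) \<le> 2 * real L" using L_eq \<open>1 \<le> L\<close> by linarith
  then have "(sqrt (real t))\<^sup>2 \<le> (2 * real L)\<^sup>2" by (intro power_mono) auto
  then show "real t \<le> 4 * (real L)\<^sup>2" by (simp add: power_mult_distrib)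
qed

lemma bound_le_rate_squared:
  assumes t: "1 \<le> t" and N: "1 \<le> N" and L: "real L \<le> sqrt (real t)"
  shows "5476 * (real N + real L) / real t \<le> (2 ^ 14 * real N powr (3/2) / real t powr (1/4))\<^sup>2"
proof -
  have "1 \<le> sqrt (real t)" using t by simp
  then have st: "sqrt (real t) \<le> real t"
    using mult_left_mono[of 1 "sqrt (real t)" "sqrt (real t)"] by simp
  have "(real N powr (3/2))\<^sup>2 = real N ^ 3"
    by (simp add: powr_powr[symmetric] powr_realpow[symmetric] power2_eq_square powr_add[symmetric] N)
  moreover have "(real t powr (1/4))\<^sup>2 = sqrt (real t)"
    by (simp add: power2_eq_square powr_add[symmetric] powr_half_sqrt[symmetric])
  ultimately have R2: "(2 ^ 14 * real N powr (3/2) / real t powr (1/4))\<^sup>2 = 2 ^ 28 * real N ^ 3 / sqrt (real t)"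
    by (simp add: power_divide power_mult_distrib)
  have "real N \<le> real N ^ 3" using power_increasing[of 1 3 "real N"] N by simp
  then have "real N * real t \<le> real N ^ 3 * real t" by (intro mult_right_mono) auto
  moreover have "real N * sqrt (real t) \<le> real N * real t" using st by (intro mult_left_mono) auto
  moreover have "real L * sqrt (real t) \<le> real t"
    using mult_right_mono[OF L, of "sqrt (real t)"] by simp
  moreover have "real t \<le> real N * real t" using N mult_right_mono[of 1 "real N" "real t"] by simp
  ultimately have "5476 * (real N + real L) * sqrt (real t) \<le> 2 ^ 28 * real N ^ 3 * real t"
    by (simp add: algebra_simps)
  then show ?thesis unfolding R2 using t st by (simp add: divide_simps)
qed

lemma divide_sqrt_le_of_Cauchy_Schwarz:
  fixes A B S R :: real
  assumes CS: "A\<^sup>2 \<le> S * B" and B: "0 \<le> B" and S: "S \<le> R\<^sup>2" and R: "0 \<le> R"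
  shows "A / sqrt (A\<^sup>2 + B) \<le> R"
proof (cases "0 < A")
  case True
  have "A\<^sup>2 \<le> R\<^sup>2 * (A\<^sup>2 + B)"
    using CS mult_right_mono[OF S B] mult_left_mono[of B "A\<^sup>2 + B" "R\<^sup>2"] by simp
  then have "A \<le> R * sqrt (A\<^sup>2 + B)"
    using True R real_sqrt_le_mono by (fastforce simp: real_sqrt_mult)
  then show ?thesis using True B by (simp add: divide_le_eq add_pos_nonneg)
next
  case False
  then have "A / sqrt (A\<^sup>2 + B) \<le> 0" using B by (intro divide_nonpos_nonneg) auto
  then show ?thesis using R by linarith
qed

theorem mainTheorem15:
  fixes M :: "'a measure" and X0 :: "'a \<Rightarrow> real"
    and W :: "(int \<times> int) \<times> nat \<Rightarrow> 'a \<Rightarrow> real" and X :: "int \<times> int \<Rightarrow> 'a \<Rightarrow> real"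
    and t N :: nat and a :: "nat \<Rightarrow> real"
  assumes model: "gaussian_broadcast_HS2 M X0 W X"
    and "t > 0" and "N > 0"
    and "\<exists>k\<in>{1..N}. a k \<noteq> 0"
  shows "let \<zeta> = (\<lambda>\<omega>. \<Sum>k=1..N. a k * X (int k, int t - int k) \<omega>);
             cov = (\<integral>\<omega>. \<zeta> \<omega> * X0 \<omega> \<partial>M) - (\<integral>\<omega>. \<zeta> \<omega> \<partial>M) * (\<integral>\<omega>. X0 \<omega> \<partial>M);
             var = (\<integral>\<omega>. (\<zeta> \<omega> - (\<integral>\<omega>'. \<zeta> \<omega>' \<partial>M))\<^sup>2 \<partial>M)
         in cov / sqrt var \<le> 2 ^ 14 * real N powr (3/2) / real t powr (1/4)"
proof -
  have t: "1 \<le> t" and N: "1 \<le> N" using assms by auto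
  define L where "L = nat \<lfloor>sqrt (real t)\<rfloor>"
  note L = floor_sqrt_bounds[OF t L_def]
  define F where "F = edges_in (target_cone t N)"
  define A where "A = (\<Sum>k=1..N. a k)"
  define b where "b = target_coeff t N a"
  define D where "D e = parent_defect (test_fn t N L) (fst e)" for e :: "(int \<times> int) \<times> nat"
  define R where "R = 2 ^ 14 * real N powr (3/2) / real t powr (1/4)"
  define \<zeta> where "\<zeta> = (\<lambda>\<omega>. \<Sum>k=1..N. a k * X (int k, int t - int k) \<omega>)"
  have \<zeta>_expansion: "\<zeta> \<omega> = A * X0 \<omega> + (\<Sum>e\<in>F. b e * W e \<omega>)" if "\<omega> \<in> space M" for \<omega>
    using target_lincomb_expansion[OF model that] by (simp add: \<zeta>_def A_def b_def F_def)
  have F: "finite F" "F \<subseteq> edges2"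
    unfolding F_def by (rule finite_edges_in_target_cone) (auto simp: edges_in_def)
  note moments = broadcast_noise_moments[OF model F \<zeta>_expansion]
  have cov: "(\<integral>\<omega>. \<zeta> \<omega> * X0 \<omega> \<partial>M) - (\<integral>\<omega>. \<zeta> \<omega> \<partial>M) * (\<integral>\<omega>. X0 \<omega> \<partial>M) = A"
    and var: "(\<integral>\<omega>. (\<zeta> \<omega> - (\<integral>\<omega>'. \<zeta> \<omega>' \<partial>M))\<^sup>2 \<partial>M) = A\<^sup>2 + (\<Sum>e\<in>F. (b e)\<^sup>2)"
    by (simp_all add: moments)
  have "A = (\<Sum>e\<in>F. D e * b e)"
    unfolding A_def b_def D_def F_def
    by (rule sum_eq_sum_parent_defect_target_coeff[where \<Psi> = "test_fn t N L"])
      (simp_all add: test_fn_rank0 test_fn_target[OF t L(1)])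
  then have CS: "A\<^sup>2 \<le> (\<Sum>e\<in>F. (D e)\<^sup>2) * (\<Sum>e\<in>F. (b e)\<^sup>2)"
    by (simp only: Cauchy_Schwarz_ineq_sum)
  have "(\<Sum>e\<in>F. (D e)\<^sup>2) \<le> R\<^sup>2"
    using sum_squares_parent_defect_test_fn_le[OF t N L(1,3)] bound_le_rate_squared[OF t N L(2)]
    unfolding D_def F_def R_def by (rule order_trans)
  moreover have "0 \<le> R" by (simp add: R_def)
  ultimately have "A / sqrt (A\<^sup>2 + (\<Sum>e\<in>F. (b e)\<^sup>2)) \<le> R"
    using CS by (intro divide_sqrt_le_of_Cauchy_Schwarz) (auto intro: sum_nonneg)
  then show ?thesis unfolding \<zeta>_def[symmetric] Let_def R_def[symmetric] cov var .
qed

end
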